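(* Let $n,d,t$ be integers with $3\le t\le d-2$ and $d\le n-3$, and let $a,b$ be positive integers with $a+b=n-d-1$. Let $H_{n,d,t;a,b}$ be the graph obtained from the disjoint union of a path $v_1v_2\dots v_{d+1}$, a complete graph $K_a$ and a complete graph $K_b$ by adding all edges between every vertex of $K_a$ and each of $v_{t-2},v_{t-1},v_t$, and all edges between every vertex of $K_b$ and each of $v_t,v_{t+1},v_{t+2}$. Then $\mu_{n-d}(H_{n,d,t;a,b})<n-d+2$.
   Context: For a graph $G$ of order $n$, $\mu_1(G)\ge\mu_2(G)\ge\dots\ge\mu_n(G)$ denote the eigenvalues of the Laplacian matrix $L(G)=D(G)-A(G)$. *)

theory Defs
  imports "Jordan_Normal_Form.Char_Poly" "HOL-Computational_Algebra.Polynomial_Factorial"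
begin

(* Simple graphs on vertex set {0..<n} given by a symmetric irreflexive adjacency predicate. *)

definition laplacian :: "nat \<Rightarrow> (nat \<Rightarrow> nat \<Rightarrow> bool) \<Rightarrow> real mat" where
  "laplacian n adj = mat n n (\<lambda>(i,j).
     if i = j then real (card {k. k < n \<and> adj i k})
     else if adj i j then -1 else 0)"

(* Eigenvalues of a real matrix with real spectrum, with multiplicity, in non-increasing order *)
definition eigs_desc :: "real mat \<Rightarrow> real list" where
  "eigs_desc M = rev (sorted_list_of_multiset (proots (char_poly M)))"

(* mu M k = k-th largest eigenvalue (1-indexed) *)
definition mu :: "real mat \<Rightarrow> nat \<Rightarrow> real" where
  "mu M k = eigs_desc M ! (k - 1)"

(* The graph H_{n,d,t;a,b}, n = d+1+a+b.
   Path vertex v_i (1 \<le> i \<le> d+1) is the number i-1; K_a occupies {d+1..d+a},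
   K_b occupies {d+a+1..d+a+b}. *)
definition H_adj :: "nat \<Rightarrow> nat \<Rightarrow> nat \<Rightarrow> nat \<Rightarrow> nat \<Rightarrow> nat \<Rightarrow> bool" where
  "H_adj d t a b i j \<longleftrightarrow> i \<noteq> j \<and> (
     let inP = (\<lambda>x. x \<le> d);
         inA = (\<lambda>x. d + 1 \<le> x \<and> x \<le> d + a);
         inB = (\<lambda>x. d + a + 1 \<le> x \<and> x \<le> d + a + b);
         nbA = {t - 3, t - 2, t - 1};
         nbB = {t - 1, t, t + 1}
     in (inP i \<and> inP j \<and> (i = j + 1 \<or> j = i + 1))
      \<or> (inA i \<and> inA j) \<or> (inB i \<and> inB j)
      \<or> (inA i \<and> j \<in> nbA) \<or> (inA j \<and> i \<in> nbA)
      \<or> (inB i \<and> j \<in> nbB) \<or> (inB j \<and> i \<in> nbB))"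

end

theory Submission
  imports Defs "Jordan_Normal_Form.Schur_Decomposition"
begin

(* On the hyperplane of vectors vanishing at the vertex v_t the Laplacian quadratic form of H
   is at most (a + b + 8/3) |x|^2.  A real symmetric matrix has orthogonal eigenvectors for its
   two largest eigenvalues, and some nonzero combination of them vanishes at v_t; so
   mu_2 < a + b + 3 = n - d + 2, and mu_(n-d) <= mu_2.

   For the bound on the hyperplane, the form splits into the squared differences along the two
   path segments left after deleting v_t, and one term for each clique together with its three
   attachment vertices.  Completing a square in the clique terms, and a weighted AM-GM estimate
   along each path segment, leave every vertex with coefficient at most a + b + 8/3. *)

section \<open>Real symmetric matrices\<close>

lemma conjugate_real_mat_mult_vec:
  fixes A :: "real mat"
  assumes A: "A \<in> carrier_mat n n" and u: "u \<in> carrier_vec n"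
  shows "conjugate (map_mat complex_of_real A *\<^sub>v u) = map_mat complex_of_real A *\<^sub>v conjugate u"
proof (rule eq_vecI)
  fix i assume "i < dim_vec (map_mat complex_of_real A *\<^sub>v conjugate u)"
  then have i: "i < n" using A by simp
  show "conjugate (map_mat complex_of_real A *\<^sub>v u) $ i = (map_mat complex_of_real A *\<^sub>v conjugate u) $ i"
    using A u i by (simp add: scalar_prod_def)
qed (use A in simp)

lemma eigenvalue_real_if_symmetric:
  fixes A :: "real mat"
  assumes A: "A \<in> carrier_mat n n" and sym: "transpose_mat A = A"
    and ev: "eigenvalue (map_mat complex_of_real A) z"
  shows "z \<in> \<real>"
proof -
  let ?A = "map_mat complex_of_real A"
  have A': "?A \<in> carrier_mat n n" and sym': "transpose_mat ?A = ?A"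
    using A sym by (auto simp: map_mat_transpose)
  obtain u where u: "u \<in> carrier_vec n" "u \<noteq> 0\<^sub>v n" and Au: "?A *\<^sub>v u = z \<cdot>\<^sub>v u"
    using ev A' unfolding eigenvalue_def eigenvector_def by auto
  have "z * (u \<bullet>c u) = (?A *\<^sub>v u) \<bullet>c u"
    using u by (simp add: Au)
  also have "\<dots> = u \<bullet> (?A *\<^sub>v conjugate u)"
    using transpose_vec_mult_scalar[OF A', of "conjugate u" u] u sym' by simp
  also have "\<dots> = cnj z * (u \<bullet>c u)"
    using u A by (simp flip: conjugate_real_mat_mult_vec add: Au conjugate_smult_vec)
  finally have "z = cnj z"
    using u by simp
  then show ?thesis
    by (metis Reals_cnj_iff)
qed

lemma char_poly_splits_if_symmetric:
  fixes A :: "real mat"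
  assumes A: "A \<in> carrier_mat n n" and sym: "transpose_mat A = A"
  obtains es where "char_poly A = (\<Prod>e\<leftarrow>es. [:-e, 1:])"
proof -
  interpret of_real: map_poly_inj_idom_hom complex_of_real ..
  let ?A = "map_mat complex_of_real A"
  have A': "?A \<in> carrier_mat n n" using A by simp
  obtain zs where zs: "char_poly ?A = (\<Prod>z\<leftarrow>zs. [:-z, 1:])"
    using char_poly_factorized[OF A'] by blast
  have "z \<in> \<real>" if "z \<in> set zs" for z
  proof (rule eigenvalue_real_if_symmetric[OF A sym])
    have "poly (char_poly ?A) z = 0" unfolding zs using that by (rule linear_poly_root)
    then show "eigenvalue ?A z" using eigenvalue_root_char_poly[OF A'] by simp
  qed
  then have real_factors: "(\<Prod>z\<leftarrow>zs. [:-z, 1:]) = map_poly complex_of_real (\<Prod>e\<leftarrow>map Re zs. [:-e, 1:])"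
    unfolding of_real.hom_prod_list map_map o_def
    by (intro arg_cong[of _ _ prod_list] map_cong) (auto elim!: Reals_cases)
  have "map_poly complex_of_real (char_poly A) = char_poly ?A"
    by (rule of_real_hom.char_poly_hom[OF A, symmetric])
  also have "\<dots> = map_poly complex_of_real (\<Prod>e\<leftarrow>map Re zs. [:-e, 1:])"
    using zs real_factors by simp
  finally have "char_poly A = (\<Prod>e\<leftarrow>map Re zs. [:-e, 1:])"
    by (rule of_real.injectivity)
  then show thesis by (rule that)
qed

lemma eigs_desc_eq_rev_sort:
  assumes "char_poly A = (\<Prod>e\<leftarrow>es. [:-e, 1:])"
  shows "eigs_desc A = rev (sort es)"
proof -
  have "proots (\<Prod>e\<leftarrow>es. [:-e, 1:]) = mset es"
  proof (induction es)
    case (Cons e es)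
    have "(\<Prod>e\<leftarrow>es. [:-e, 1:]) \<noteq> 0" by (auto simp: prod_list_zero_iff)
    with Cons show ?case by (simp add: proots_mult del: mult_pCons_left)
  qed simp
  then show ?thesis
    unfolding eigs_desc_def assms by (simp add: sorted_list_of_multiset_mset)
qed

lemma schur_leading_columns:
  fixes A :: "real mat"
  assumes A: "A \<in> carrier_mat n n" and cp: "char_poly A = (\<Prod>e\<leftarrow>e1 # e2 # es. [:-e, 1:])"
  obtains u p Q \<beta> where "u \<in> carrier_vec n" "p \<in> carrier_vec n" "Q \<in> carrier_mat n n" "2 \<le> n"
    "Q *\<^sub>v u = unit_vec n 0" "Q *\<^sub>v p = unit_vec n 1"
    "A *\<^sub>v u = e1 \<cdot>\<^sub>v u" "A *\<^sub>v p = \<beta> \<cdot>\<^sub>v u + e2 \<cdot>\<^sub>v p"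
proof -
  obtain B P Q where "schur_decomposition A (e1 # e2 # es) = (B, P, Q)"
    by (cases "schur_decomposition A (e1 # e2 # es)") auto
  from schur_decomposition[OF A cp this] A
  have B: "B \<in> carrier_mat n n" and P: "P \<in> carrier_mat n n" and Q: "Q \<in> carrier_mat n n"
    and QP: "Q * P = 1\<^sub>m n" and APBQ: "A = P * B * Q"
    and triangular: "upper_triangular B" and diag: "diag_mat B = e1 # e2 # es"
    unfolding similar_mat_wit_def Let_def by auto
  have n: "2 \<le> n" using arg_cong[OF diag, of length] B by (simp add: diag_mat_def)
  have diag_nth: "(e1 # e2 # es) ! i = B $$ (i, i)" if "i < n" for i
    using that B unfolding diag[symmetric] diag_mat_def by simp
  have B00: "B $$ (0, 0) = e1" and B11: "B $$ (1, 1) = e2"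
    using diag_nth[of 0] diag_nth[of 1] n by simp_all
  have "A * P = P * B * (Q * P)"
    unfolding APBQ using P B Q by (metis assoc_mult_mat mult_carrier_mat)
  then have AP: "A * P = P * B" using P B QP by simp
  have P_unit: "P *\<^sub>v unit_vec n j = col P j" if "j < n" for j
    using col_mult2[OF P one_carrier_mat that] P that by simp
  have A_col: "A *\<^sub>v col P j = P *\<^sub>v col B j" if "j < n" for j
    using col_mult2[OF A P, of j] col_mult2[OF P B, of j] that AP by simp
  have "col B 0 = e1 \<cdot>\<^sub>v unit_vec n 0"
    using B B00 triangular n by (intro eq_vecI) (auto simp: upper_triangular_def)
  then have "A *\<^sub>v col P 0 = e1 \<cdot>\<^sub>v col P 0"
    using A_col[of 0] P_unit[of 0] P n by (simp add: mult_mat_vec)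
  moreover have "col B 1 = B $$ (0, 1) \<cdot>\<^sub>v unit_vec n 0 + e2 \<cdot>\<^sub>v unit_vec n 1"
    using B B11 triangular n by (intro eq_vecI) (auto simp: upper_triangular_def)
  then have "A *\<^sub>v col P 1 = B $$ (0, 1) \<cdot>\<^sub>v col P 0 + e2 \<cdot>\<^sub>v col P 1"
    using A_col[of 1] P_unit[of 0] P_unit[of 1] P n
    by (simp add: mult_add_distrib_mat_vec[OF P] mult_mat_vec[OF P])
  moreover have "Q *\<^sub>v col P j = unit_vec n j" if "j < n" for j
    using col_mult2[OF Q P that] QP that by simp
  ultimately show thesis
    using that[of "col P 0" "col P 1" Q "B $$ (0, 1)"] P Q n by (simp add: carrier_vecI)
qed

(* Schur triangularisation gives A p = \<beta> u + e2 p with p independent of u; symmetry forces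
   \<beta> = k (e1 - e2) for the Gram-Schmidt coefficient k, so p - k u is an eigenvector for e2. *)
lemma orthogonal_eigenvectors_if_symmetric:
  fixes A :: "real mat"
  assumes A: "A \<in> carrier_mat n n" and sym: "transpose_mat A = A"
    and cp: "char_poly A = (\<Prod>e\<leftarrow>e1 # e2 # es. [:-e, 1:])"
  obtains u w where "u \<in> carrier_vec n" "w \<in> carrier_vec n" "u \<noteq> 0\<^sub>v n" "w \<noteq> 0\<^sub>v n"
    "A *\<^sub>v u = e1 \<cdot>\<^sub>v u" "A *\<^sub>v w = e2 \<cdot>\<^sub>v w" "u \<bullet> w = 0"
proof -
  obtain u p Q \<beta> where u: "u \<in> carrier_vec n" and p: "p \<in> carrier_vec n"
    and Q: "Q \<in> carrier_mat n n" and n: "2 \<le> n"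
    and Qu: "Q *\<^sub>v u = unit_vec n 0" and Qp: "Q *\<^sub>v p = unit_vec n 1"
    and Au: "A *\<^sub>v u = e1 \<cdot>\<^sub>v u" and Ap: "A *\<^sub>v p = \<beta> \<cdot>\<^sub>v u + e2 \<cdot>\<^sub>v p"
    using schur_leading_columns[OF A cp] by blast
  define k where "k = (u \<bullet> p) / (u \<bullet> u)"
  define w where "w = p - k \<cdot>\<^sub>v u"
  have w: "w \<in> carrier_vec n" using u p by (simp add: w_def)
  have "Q *\<^sub>v u \<noteq> 0\<^sub>v n"
    using Qu n by simp
  then have u0: "u \<noteq> 0\<^sub>v n" using Q by auto
  have "Q *\<^sub>v w = Q *\<^sub>v p - k \<cdot>\<^sub>v (Q *\<^sub>v u)"
    using Q u p by (simp add: w_def mult_minus_distrib_mat_vec[OF Q] mult_mat_vec[OF Q])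
  then have "(Q *\<^sub>v w) $ 1 = 1"
    using Qu Qp n by simp
  then have w0: "w \<noteq> 0\<^sub>v n" using Q n by auto
  have uu: "u \<bullet> u > 0" using u u0 conjugate_square_greater_0_vec[OF u] by simp
  have "(A *\<^sub>v u) \<bullet> p = u \<bullet> (A *\<^sub>v p)"
    using transpose_vec_mult_scalar[OF A p u] sym by simp
  then have "e1 * (u \<bullet> p) = \<beta> * (u \<bullet> u) + e2 * (u \<bullet> p)"
    using u p by (simp add: Au Ap scalar_prod_add_distrib[OF u])
  then have \<beta>: "\<beta> = k * (e1 - e2)"
    using uu by (simp add: k_def field_simps)
  have "A *\<^sub>v w = A *\<^sub>v p - k \<cdot>\<^sub>v (A *\<^sub>v u)"
    using A u p by (simp add: w_def mult_minus_distrib_mat_vec[OF A] mult_mat_vec[OF A])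
  also have "\<dots> = e2 \<cdot>\<^sub>v w"
    unfolding w_def Au Ap \<beta>
    by (intro eq_vecI) (use u p in \<open>auto simp: algebra_simps\<close>)
  finally have Aw: "A *\<^sub>v w = e2 \<cdot>\<^sub>v w" .
  have "u \<bullet> w = 0"
    using u p uu by (simp add: w_def scalar_prod_minus_distrib[OF u] k_def)
  with that u w u0 w0 Au Aw show thesis by blast
qed

lemma orthogonal_eigenvectors_vanishing_combination:
  fixes A :: "real mat"
  assumes A: "A \<in> carrier_mat n n"
    and u: "u \<in> carrier_vec n" and w: "w \<in> carrier_vec n"
    and u0: "u \<noteq> 0\<^sub>v n" and w0: "w \<noteq> 0\<^sub>v n"
    and Au: "A *\<^sub>v u = e1 \<cdot>\<^sub>v u" and Aw: "A *\<^sub>v w = e2 \<cdot>\<^sub>v w" and orth: "u \<bullet> w = 0"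
    and x: "x \<le> e1" "x \<le> e2" and c: "c < n"
  obtains v where "v \<in> carrier_vec n" "v \<noteq> 0\<^sub>v n" "v $ c = 0" "x * (v \<bullet> v) \<le> v \<bullet> (A *\<^sub>v v)"
proof -
  have uu: "u \<bullet> u > 0" and ww: "w \<bullet> w > 0"
    using u w u0 w0 conjugate_square_greater_0_vec[OF u] conjugate_square_greater_0_vec[OF w] by auto
  show thesis
  proof (cases "u $ c = 0")
    case True
    have "x * (u \<bullet> u) \<le> u \<bullet> (A *\<^sub>v u)"
      using u uu x by (simp add: Au mult_right_mono)
    with that u u0 True show thesis by blast
  next
    case False
    define \<alpha> where "\<alpha> = w $ c"
    define \<gamma> where "\<gamma> = - u $ c"
    define v where "v = \<alpha> \<cdot>\<^sub>v u + \<gamma> \<cdot>\<^sub>v w"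
    have v: "v \<in> carrier_vec n" using u w by (simp add: v_def)
    have wu: "w \<bullet> u = 0" using orth comm_scalar_prod[OF u w] by simp
    have vv: "v \<bullet> v = \<alpha>\<^sup>2 * (u \<bullet> u) + \<gamma>\<^sup>2 * (w \<bullet> w)"
      unfolding v_def using u w orth wu
      by (simp add: add_scalar_prod_distrib[of _ n] scalar_prod_add_distrib[of _ n] power2_eq_square)
    have "A *\<^sub>v v = (\<alpha> * e1) \<cdot>\<^sub>v u + (\<gamma> * e2) \<cdot>\<^sub>v w"
      unfolding v_def using u w A Au Aw
      by (simp add: mult_add_distrib_mat_vec[OF A] mult_mat_vec[OF A] smult_smult_assoc)
    then have vAv: "v \<bullet> (A *\<^sub>v v) = \<alpha>\<^sup>2 * e1 * (u \<bullet> u) + \<gamma>\<^sup>2 * e2 * (w \<bullet> w)"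
      unfolding v_def using u w orth wu
      by (simp add: add_scalar_prod_distrib[of _ n] scalar_prod_add_distrib[of _ n] power2_eq_square)
    have "v $ c = 0" using u w c by (simp add: v_def \<alpha>_def \<gamma>_def)
    moreover have "v \<noteq> 0\<^sub>v n"
    proof
      assume "v = 0\<^sub>v n"
      then have "\<alpha>\<^sup>2 * (u \<bullet> u) + \<gamma>\<^sup>2 * (w \<bullet> w) = 0" using vv by simp
      then have "\<gamma>\<^sup>2 * (w \<bullet> w) = 0"
        using uu ww by (simp add: add_nonneg_eq_0_iff)
      then show False using ww False by (simp add: \<gamma>_def)
    qed
    moreover have "x * (v \<bullet> v) \<le> v \<bullet> (A *\<^sub>v v)"
    proof -
      have "x * (\<alpha>\<^sup>2 * (u \<bullet> u)) \<le> \<alpha>\<^sup>2 * e1 * (u \<bullet> u)"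
        using x uu by (simp add: mult_right_mono mult.commute mult.left_commute)
      moreover have "x * (\<gamma>\<^sup>2 * (w \<bullet> w)) \<le> \<gamma>\<^sup>2 * e2 * (w \<bullet> w)"
        using x ww by (simp add: mult_right_mono mult.commute mult.left_commute)
      ultimately show ?thesis unfolding vv vAv by (simp add: distrib_left)
    qed
    ultimately show thesis using that v by blast
  qed
qed

lemma mu_less_if_form_less_on_hyperplane:
  fixes A :: "real mat"
  assumes A: "A \<in> carrier_mat n n" and sym: "transpose_mat A = A" and c: "c < n"
    and form: "\<And>v. v \<in> carrier_vec n \<Longrightarrow> v \<noteq> 0\<^sub>v n \<Longrightarrow> v $ c = 0 \<Longrightarrow>
      v \<bullet> (A *\<^sub>v v) < x * (v \<bullet> v)"
    and k: "2 \<le> k" "k \<le> n"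
  shows "mu A k < x"
proof (rule ccontr)
  assume "\<not> mu A k < x"
  then have x: "x \<le> eigs_desc A ! (k - 1)" by (simp add: mu_def)
  obtain es where cp: "char_poly A = (\<Prod>e\<leftarrow>es. [:-e, 1:])"
    using char_poly_splits_if_symmetric[OF A sym] .
  have "length es = n"
    using degree_linear_factors[of uminus es] degree_monic_char_poly[OF A] by (simp add: cp)
  moreover have eigs: "eigs_desc A = rev (sort es)" by (rule eigs_desc_eq_rev_sort[OF cp])
  ultimately have len: "length (eigs_desc A) = n" by simp
  then obtain e1 e2 rest where e12: "eigs_desc A = e1 # e2 # rest"
    using k by (cases "eigs_desc A"; cases "tl (eigs_desc A)") auto
  have sorted: "sorted (rev (eigs_desc A))" by (simp add: eigs)
  have "eigs_desc A ! (k - 1) \<le> eigs_desc A ! 1" "eigs_desc A ! 1 \<le> eigs_desc A ! 0"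
    using sorted_rev_nth_mono[OF sorted] k len by auto
  then have "x \<le> e1" "x \<le> e2" using x e12 by simp_all
  have "char_poly A = (\<Prod>e\<leftarrow>e1 # e2 # rest. [:-e, 1:])"
    unfolding cp e12[symmetric] eigs by (simp flip: prod_mset_prod_list)
  then obtain u w where "u \<in> carrier_vec n" "w \<in> carrier_vec n" "u \<noteq> 0\<^sub>v n" "w \<noteq> 0\<^sub>v n"
    "A *\<^sub>v u = e1 \<cdot>\<^sub>v u" "A *\<^sub>v w = e2 \<cdot>\<^sub>v w" "u \<bullet> w = 0"
    by (rule orthogonal_eigenvectors_if_symmetric[OF A sym])
  with \<open>x \<le> e1\<close> \<open>x \<le> e2\<close> obtain v where "v \<in> carrier_vec n" "v \<noteq> 0\<^sub>v n" "v $ c = 0"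
    "x * (v \<bullet> v) \<le> v \<bullet> (A *\<^sub>v v)"
    using orthogonal_eigenvectors_vanishing_combination[OF A _ _ _ _ _ _ _ _ _ c] by blast
  with form show False by fastforce
qed

section \<open>Laplacian quadratic forms\<close>

lemma laplacian_carrier: "laplacian n adj \<in> carrier_mat n n"
  by (simp add: laplacian_def)

lemma laplacian_transpose:
  assumes "\<And>i j. adj i j = adj j i"
  shows "transpose_mat (laplacian n adj) = laplacian n adj"
  by (rule eq_matI) (auto simp: laplacian_def assms)

lemma laplacian_mult_vec_nth:
  assumes irrefl: "\<And>i. \<not> adj i i" and v: "v \<in> carrier_vec n" and i: "i < n"
  shows "(laplacian n adj *\<^sub>v v) $ i = (\<Sum>j | j < n \<and> adj i j. v $ i - v $ j)"
proof -
  let ?N = "{j. j < n \<and> adj i j}"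
  have "(laplacian n adj *\<^sub>v v) $ i = (\<Sum>j<n. laplacian n adj $$ (i, j) * v $ j)"
    using v i by (simp add: laplacian_def scalar_prod_def lessThan_atLeast0)
  also have "\<dots> = (\<Sum>j<n. (if j = i then real (card ?N) * v $ i else 0) + (if adj i j then - v $ j else 0))"
    using i irrefl by (intro sum.cong) (auto simp: laplacian_def)
  also have "\<dots> = real (card ?N) * v $ i - (\<Sum>j\<in>?N. v $ j)"
    using i by (simp add: sum.distrib sum.If_cases sum_negf Collect_conj_eq lessThan_def Int_commute)
  also have "\<dots> = (\<Sum>j\<in>?N. v $ i - v $ j)"
    by (simp add: sum_subtractf)
  finally show ?thesis .
qed

lemma laplacian_form:
  assumes "\<And>i. \<not> adj i i" and v: "v \<in> carrier_vec n"
  shows "v \<bullet> (laplacian n adj *\<^sub>v v) = (\<Sum>i<n. v $ i * (\<Sum>j | j < n \<and> adj i j. v $ i - v $ j))"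
proof -
  have "v \<bullet> (laplacian n adj *\<^sub>v v) = (\<Sum>i<n. v $ i * (laplacian n adj *\<^sub>v v) $ i)"
    using v laplacian_carrier[of n adj] by (simp add: scalar_prod_def lessThan_atLeast0)
  also have "\<dots> = (\<Sum>i<n. v $ i * (\<Sum>j | j < n \<and> adj i j. v $ i - v $ j))"
    by (intro sum.cong refl) (simp add: laplacian_mult_vec_nth[OF assms])
  finally show ?thesis .
qed

lemma path_laplacian_form:
  fixes w :: "nat \<Rightarrow> real"
  shows "(\<Sum>i\<le>D. w i * (\<Sum>j | j \<le> D \<and> (i = j + 1 \<or> j = i + 1). w i - w j))
    = (\<Sum>i<D. (w i - w (i + 1))\<^sup>2)"
proof -
  have nbrs: "(\<Sum>j | j \<le> D \<and> (i = j + 1 \<or> j = i + 1). w i - w j)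
      = (if 0 < i then w i - w (i - 1) else 0) + (if i < D then w i - w (i + 1) else 0)"
    if "i \<le> D" for i
  proof -
    have "{j. j \<le> D \<and> (i = j + 1 \<or> j = i + 1)}
        = (if 0 < i then {i - 1} else {}) \<union> (if i < D then {i + 1} else {})"
      using that by auto
    then show ?thesis by (cases "0 < i"; cases "i < D") auto
  qed
  have left: "(\<Sum>i\<le>D. w i * (if 0 < i then w i - w (i - 1) else 0))
      = (\<Sum>i<D. w (i + 1) * (w (i + 1) - w i))"
    unfolding lessThan_Suc_atMost[symmetric] sum.lessThan_Suc_shift by simp
  have right: "(\<Sum>i\<le>D. w i * (if i < D then w i - w (i + 1) else 0))
      = (\<Sum>i<D. w i * (w i - w (i + 1)))"
    unfolding lessThan_Suc_atMost[symmetric] sum.lessThan_Suc by (auto intro: sum.cong)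
  have "(\<Sum>i\<le>D. w i * (\<Sum>j | j \<le> D \<and> (i = j + 1 \<or> j = i + 1). w i - w j))
      = (\<Sum>i\<le>D. w i * (if 0 < i then w i - w (i - 1) else 0)
          + w i * (if i < D then w i - w (i + 1) else 0))"
    by (intro sum.cong refl) (simp only: atMost_iff nbrs distrib_left)
  also have "\<dots> = (\<Sum>i\<le>D. w i * (if 0 < i then w i - w (i - 1) else 0))
      + (\<Sum>i\<le>D. w i * (if i < D then w i - w (i + 1) else 0))"
    by (rule sum.distrib)
  also have "\<dots> = (\<Sum>i<D. (w i - w (i + 1))\<^sup>2)"
    unfolding left right by (simp add: sum.distrib[symmetric] power2_eq_square algebra_simps)
  finally show ?thesis .
qed

(* The part of the vertex-by-vertex expansion of the Laplacian form that comes from the edges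
   inside the clique K and the edges between K and the independent set S. *)
definition clique_join_form :: "'a set \<Rightarrow> 'a set \<Rightarrow> ('a \<Rightarrow> real) \<Rightarrow> real" where
  "clique_join_form K S u =
     (\<Sum>i\<in>K. u i * ((\<Sum>j\<in>K. u i - u j) + (\<Sum>j\<in>S. u i - u j))) + (\<Sum>j\<in>S. u j * (\<Sum>i\<in>K. u j - u i))"

lemma clique_join_form_le:
  fixes u :: "'a \<Rightarrow> real"
  shows "clique_join_form K S u
    \<le> (card K + card S) * (\<Sum>i\<in>K. (u i)\<^sup>2) + card K * (\<Sum>j\<in>S. (u j)\<^sup>2) + (\<Sum>j\<in>S. u j)\<^sup>2"
proof -
  define \<sigma>K where "\<sigma>K = (\<Sum>i\<in>K. u i)"
  define \<sigma>S where "\<sigma>S = (\<Sum>j\<in>S. u j)"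
  have row: "(\<Sum>j\<in>T. u i - u j) = card T * u i - (\<Sum>j\<in>T. u j)" for i and T :: "'a set"
    by (simp add: sum_subtractf)
  have "(\<Sum>i\<in>K. u i * ((\<Sum>j\<in>K. u i - u j) + (\<Sum>j\<in>S. u i - u j)))
      = (\<Sum>i\<in>K. (card K + card S) * (u i)\<^sup>2 - (\<sigma>K + \<sigma>S) * u i)"
    unfolding row \<sigma>K_def \<sigma>S_def by (simp add: power2_eq_square algebra_simps)
  also have "\<dots> = (card K + card S) * (\<Sum>i\<in>K. (u i)\<^sup>2) - (\<sigma>K + \<sigma>S) * \<sigma>K"
    by (simp add: sum_subtractf sum_distrib_left \<sigma>K_def)
  finally have K_part: "(\<Sum>i\<in>K. u i * ((\<Sum>j\<in>K. u i - u j) + (\<Sum>j\<in>S. u i - u j)))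
      = (card K + card S) * (\<Sum>i\<in>K. (u i)\<^sup>2) - (\<sigma>K + \<sigma>S) * \<sigma>K" .
  have "(\<Sum>j\<in>S. u j * (\<Sum>i\<in>K. u j - u i)) = (\<Sum>j\<in>S. card K * (u j)\<^sup>2 - \<sigma>K * u j)"
    unfolding row \<sigma>K_def by (simp add: power2_eq_square algebra_simps)
  also have "\<dots> = card K * (\<Sum>j\<in>S. (u j)\<^sup>2) - \<sigma>K * \<sigma>S"
    by (simp add: sum_subtractf sum_distrib_left \<sigma>S_def)
  finally have S_part: "(\<Sum>j\<in>S. u j * (\<Sum>i\<in>K. u j - u i)) = card K * (\<Sum>j\<in>S. (u j)\<^sup>2) - \<sigma>K * \<sigma>S" .
  have "0 \<le> (\<sigma>K + \<sigma>S)\<^sup>2" by simp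
  then show ?thesis
    unfolding clique_join_form_def K_part S_part \<sigma>S_def[symmetric]
    by (simp add: power2_eq_square algebra_simps)
qed

lemma square_diff_le_weighted:
  fixes x y :: real
  shows "(x - y)\<^sup>2 \<le> 5/2 * x\<^sup>2 + 5/3 * y\<^sup>2"
proof -
  have "0 \<le> (3 * x + 2 * y)\<^sup>2" by simp
  then show ?thesis by (simp add: power2_eq_square algebra_simps)
qed

(* The weight 5/3 at the end vertex is what a path vertex attached to a clique can afford
   in the graph H; the weight 25/6 of the other vertices stays below a + b + 8/3. *)
lemma path_energy_le_last:
  fixes w :: "nat \<Rightarrow> real"
  assumes "lo \<le> hi"
  shows "(\<Sum>i\<in>{lo..<hi}. (w i - w (i + 1))\<^sup>2) \<le> 5/3 * (w hi)\<^sup>2 + 25/6 * (\<Sum>i\<in>{lo..<hi}. (w i)\<^sup>2)"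
  using assms
proof (induction hi rule: dec_induct)
  case (step m)
  with square_diff_le_weighted[of "w m" "w (Suc m)"] show ?case by (simp add: field_simps)
qed simp

lemma path_energy_le_first:
  fixes w :: "nat \<Rightarrow> real"
  assumes "lo \<le> hi"
  shows "(\<Sum>i\<in>{lo..<hi}. (w i - w (i + 1))\<^sup>2) \<le> 5/3 * (w lo)\<^sup>2 + 25/6 * (\<Sum>i\<in>{lo<..hi}. (w i)\<^sup>2)"
  using assms
proof (induction lo rule: inc_induct)
  case (step m)
  have "{m..<hi} = insert m {Suc m..<hi}" "{m<..hi} = insert (Suc m) {Suc m<..hi}"
    using step.hyps by auto
  with step.IH square_diff_le_weighted[of "w (Suc m)" "w m"] show ?case
    by (simp add: power2_commute field_simps)
qed simp

section \<open>The graph H\<close>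

lemma H_adj_sym: "H_adj d t a b i j = H_adj d t a b j i"
  unfolding H_adj_def Let_def by auto

lemma H_adj_irrefl: "\<not> H_adj d t a b i i"
  unfolding H_adj_def by simp

locale H_graph =
  fixes n d t a b :: nat
  assumes t_ge: "3 \<le> t" and d_ge: "t + 2 \<le> d" and a_pos: "0 < a" and b_pos: "0 < b"
    and n_eq: "n = d + a + b + 1"
begin

abbreviation nbhd :: "nat \<Rightarrow> nat set" where
  "nbhd i \<equiv> {j. j < n \<and> H_adj d t a b i j}"

abbreviation clique_A :: "nat set" where "clique_A \<equiv> {d + 1..d + a}"
abbreviation clique_B :: "nat set" where "clique_B \<equiv> {d + a + 1..d + a + b}"
abbreviation attach_A :: "nat set" where "attach_A \<equiv> {t - 3, t - 2, t - 1}"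
abbreviation attach_B :: "nat set" where "attach_B \<equiv> {t - 1, t, t + 1}"

lemma nbhd_clique_A: "i \<in> clique_A \<Longrightarrow> nbhd i = (clique_A - {i}) \<union> attach_A"
  using t_ge d_ge n_eq unfolding H_adj_def Let_def by auto

lemma nbhd_clique_B: "i \<in> clique_B \<Longrightarrow> nbhd i = (clique_B - {i}) \<union> attach_B"
  using t_ge d_ge n_eq unfolding H_adj_def Let_def by auto

lemma nbhd_path:
  "i \<le> d \<Longrightarrow> nbhd i = {j. j \<le> d \<and> (i = j + 1 \<or> j = i + 1)}
     \<union> (if i \<in> attach_A then clique_A else {}) \<union> (if i \<in> attach_B then clique_B else {})"
  using t_ge d_ge n_eq unfolding H_adj_def Let_def by auto

lemma sum_vertices:
  "(\<Sum>i<n. f i) = (\<Sum>i\<le>d. f i) + (\<Sum>i\<in>clique_A. f i) + (\<Sum>i\<in>clique_B. f i)"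
proof -
  have "{..<n} = {..d} \<union> clique_A \<union> clique_B" using n_eq by auto
  moreover have "{..d} \<inter> clique_A = {}" "({..d} \<union> clique_A) \<inter> clique_B = {}" by auto
  ultimately show ?thesis by (simp add: sum.union_disjoint)
qed

lemma sum_nbhd_clique:
  fixes u :: "nat \<Rightarrow> real"
  assumes i: "i \<in> K" and K: "finite K" and S: "finite S" "K \<inter> S = {}"
    and nbhd: "nbhd i = (K - {i}) \<union> S"
  shows "(\<Sum>j\<in>nbhd i. u i - u j) = (\<Sum>j\<in>K. u i - u j) + (\<Sum>j\<in>S. u i - u j)"
proof -
  have "(\<Sum>j\<in>K - {i}. u i - u j) = (\<Sum>j\<in>K. u i - u j)"
    using i K by (simp add: sum_diff1)
  with K S show ?thesis unfolding nbhd by (subst sum.union_disjoint) auto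
qed

lemma sum_nbhd_clique_A:
  fixes u :: "nat \<Rightarrow> real"
  assumes "i \<in> clique_A"
  shows "(\<Sum>j\<in>nbhd i. u i - u j) = (\<Sum>j\<in>clique_A. u i - u j) + (\<Sum>j\<in>attach_A. u i - u j)"
  using assms d_ge by (intro sum_nbhd_clique nbhd_clique_A) auto

lemma sum_nbhd_clique_B:
  fixes u :: "nat \<Rightarrow> real"
  assumes "i \<in> clique_B"
  shows "(\<Sum>j\<in>nbhd i. u i - u j) = (\<Sum>j\<in>clique_B. u i - u j) + (\<Sum>j\<in>attach_B. u i - u j)"
  using assms d_ge by (intro sum_nbhd_clique nbhd_clique_B) auto

lemma H_form_eq:
  fixes u :: "nat \<Rightarrow> real"
  shows "(\<Sum>i<n. u i * (\<Sum>j\<in>nbhd i. u i - u j))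
    = (\<Sum>i<d. (u i - u (i + 1))\<^sup>2) + clique_join_form clique_A attach_A u
      + clique_join_form clique_B attach_B u"
proof -
  have row_path: "(\<Sum>j\<in>nbhd i. u i - u j)
      = (\<Sum>j | j \<le> d \<and> (i = j + 1 \<or> j = i + 1). u i - u j)
        + (if i \<in> attach_A then \<Sum>j\<in>clique_A. u i - u j else 0)
        + (if i \<in> attach_B then \<Sum>j\<in>clique_B. u i - u j else 0)" if "i \<le> d" for i
  proof -
    let ?P = "{j. j \<le> d \<and> (i = j + 1 \<or> j = i + 1)}"
    let ?XA = "if i \<in> attach_A then clique_A else {}"
    let ?XB = "if i \<in> attach_B then clique_B else {}"
    have "?P \<inter> ?XA = {}" "(?P \<union> ?XA) \<inter> ?XB = {}" by auto
    then have "(\<Sum>j\<in>nbhd i. u i - u j)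
        = (\<Sum>j\<in>?P. u i - u j) + (\<Sum>j\<in>?XA. u i - u j) + (\<Sum>j\<in>?XB. u i - u j)"
      unfolding nbhd_path[OF that] by (simp add: sum.union_disjoint)
    then show ?thesis by simp
  qed
  have "(\<Sum>i\<le>d. u i * (\<Sum>j\<in>nbhd i. u i - u j))
      = (\<Sum>i\<le>d. u i * (\<Sum>j | j \<le> d \<and> (i = j + 1 \<or> j = i + 1). u i - u j))
        + (\<Sum>i\<le>d. if i \<in> attach_A then u i * (\<Sum>j\<in>clique_A. u i - u j) else 0)
        + (\<Sum>i\<le>d. if i \<in> attach_B then u i * (\<Sum>j\<in>clique_B. u i - u j) else 0)"
    by (simp only: sum.distrib[symmetric]) (intro sum.cong refl, simp add: row_path distrib_left)
  also have "\<dots> = (\<Sum>i<d. (u i - u (i + 1))\<^sup>2)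
        + (\<Sum>i\<in>attach_A. u i * (\<Sum>j\<in>clique_A. u i - u j))
        + (\<Sum>i\<in>attach_B. u i * (\<Sum>j\<in>clique_B. u i - u j))"
  proof -
    have restrict: "(\<Sum>i\<le>d. if i \<in> X then g i else 0) = sum g X" if "X \<subseteq> {..d}"
      for X and g :: "nat \<Rightarrow> real"
      using that by (simp add: sum.inter_restrict[symmetric] Int_absorb1)
    have sub: "attach_A \<subseteq> {..d}" "attach_B \<subseteq> {..d}" using d_ge by auto
    show ?thesis unfolding path_laplacian_form restrict[OF sub(1)] restrict[OF sub(2)] ..
  qed
  finally have path_part: "(\<Sum>i\<le>d. u i * (\<Sum>j\<in>nbhd i. u i - u j)) = \<dots>" .
  have "(\<Sum>i\<in>clique_A. u i * (\<Sum>j\<in>nbhd i. u i - u j))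
      = (\<Sum>i\<in>clique_A. u i * ((\<Sum>j\<in>clique_A. u i - u j) + (\<Sum>j\<in>attach_A. u i - u j)))"
    by (intro sum.cong refl) (simp only: sum_nbhd_clique_A)
  moreover have "(\<Sum>i\<in>clique_B. u i * (\<Sum>j\<in>nbhd i. u i - u j))
      = (\<Sum>i\<in>clique_B. u i * ((\<Sum>j\<in>clique_B. u i - u j) + (\<Sum>j\<in>attach_B. u i - u j)))"
    by (intro sum.cong refl) (simp only: sum_nbhd_clique_B)
  ultimately show ?thesis
    unfolding sum_vertices path_part clique_join_form_def by simp
qed

lemma path_energy_split:
  fixes u :: "nat \<Rightarrow> real"
  assumes t: "t = s + 3" and zero: "u (s + 2) = 0"
  shows "(\<Sum>i<d. (u i - u (i + 1))\<^sup>2) = (\<Sum>i\<in>{0..<s}. (u i - u (i + 1))\<^sup>2)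
    + (u s - u (s + 1))\<^sup>2 + (u (s + 1))\<^sup>2 + (u (s + 3))\<^sup>2 + (u (s + 3) - u (s + 4))\<^sup>2
    + (\<Sum>i\<in>{s + 4..<d}. (u i - u (i + 1))\<^sup>2)"
proof -
  have "(\<Sum>i<d. (u i - u (i + 1))\<^sup>2)
      = (\<Sum>i\<in>{0..<s} \<union> {s, s + 1, s + 2, s + 3} \<union> {s + 4..<d}. (u i - u (i + 1))\<^sup>2)"
    using d_ge t by (intro sum.cong) auto
  then show ?thesis
    using zero by (simp add: sum.union_disjoint ivl_disj_int eval_nat_numeral)
qed

lemma sum_squares_split:
  fixes u :: "nat \<Rightarrow> real"
  assumes t: "t = s + 3" and zero: "u (s + 2) = 0"
  shows "(\<Sum>i<n. (u i)\<^sup>2) = (\<Sum>i\<in>{0..<s}. (u i)\<^sup>2)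
    + (u s)\<^sup>2 + (u (s + 1))\<^sup>2 + (u (s + 3))\<^sup>2 + (u (s + 4))\<^sup>2 + (\<Sum>i\<in>{s + 4<..d}. (u i)\<^sup>2)
    + (\<Sum>i\<in>clique_A. (u i)\<^sup>2) + (\<Sum>i\<in>clique_B. (u i)\<^sup>2)"
proof -
  have "(\<Sum>i\<le>d. (u i)\<^sup>2) = (\<Sum>i\<in>{0..<s} \<union> {s, s + 1, s + 2, s + 3, s + 4} \<union> {s + 4<..d}. (u i)\<^sup>2)"
    using d_ge t by (intro sum.cong) auto
  moreover have "{0..<s} \<inter> {s + 4<..d} = {}" by auto
  ultimately show ?thesis
    using zero by (simp add: sum_vertices sum.union_disjoint)
qed

lemma H_form_le:
  fixes u :: "nat \<Rightarrow> real"
  assumes zero: "u (t - 1) = 0"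
  shows "(\<Sum>i<n. u i * (\<Sum>j\<in>nbhd i. u i - u j)) \<le> (real a + real b + 8/3) * (\<Sum>i<n. (u i)\<^sup>2)"
proof -
  define s where "s = t - 3"
  \<comment> \<open>the path vertices v_(t-2), ..., v_(t+2) are s, ..., s + 4, and v_t is s + 2\<close>
  have t: "t = s + 3" using t_ge by (simp add: s_def)
  have zero: "u (s + 2) = 0" using zero by (simp add: t)
  define L where "L = (\<Sum>i\<in>{0..<s}. (u i)\<^sup>2)"
  define R where "R = (\<Sum>i\<in>{s + 4<..d}. (u i)\<^sup>2)"
  define QA where "QA = (\<Sum>i\<in>clique_A. (u i)\<^sup>2)"
  define QB where "QB = (\<Sum>i\<in>clique_B. (u i)\<^sup>2)"
  have attach: "attach_A = {s, s + 1, s + 2}" "attach_B = {s + 2, s + 3, s + 4}"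
    by (auto simp: t)
  note path = path_energy_split[where s = s and u = u, OF t zero]
  have vertices: "(\<Sum>i<n. (u i)\<^sup>2)
      = L + (u s)\<^sup>2 + (u (s + 1))\<^sup>2 + (u (s + 3))\<^sup>2 + (u (s + 4))\<^sup>2 + R + QA + QB"
    unfolding sum_squares_split[where s = s and u = u, OF t zero] L_def R_def QA_def QB_def ..
  have left: "(\<Sum>i\<in>{0..<s}. (u i - u (i + 1))\<^sup>2) \<le> 5/3 * (u s)\<^sup>2 + 25/6 * L"
    unfolding L_def by (rule path_energy_le_last) simp
  have right: "(\<Sum>i\<in>{s + 4..<d}. (u i - u (i + 1))\<^sup>2) \<le> 5/3 * (u (s + 4))\<^sup>2 + 25/6 * R"
    unfolding R_def by (rule path_energy_le_first) (use d_ge t in simp)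
  have A: "clique_join_form clique_A attach_A u
      \<le> (real a + 3) * QA + real a * ((u s)\<^sup>2 + (u (s + 1))\<^sup>2) + (u s + u (s + 1))\<^sup>2"
    using clique_join_form_le[of clique_A attach_A u] zero unfolding attach by (simp add: QA_def add.commute)
  have B: "clique_join_form clique_B attach_B u
      \<le> (real b + 3) * QB + real b * ((u (s + 3))\<^sup>2 + (u (s + 4))\<^sup>2) + (u (s + 3) + u (s + 4))\<^sup>2"
    using clique_join_form_le[of clique_B attach_B u] zero unfolding attach by (simp add: QB_def add.commute)
  have "(\<Sum>i<n. u i * (\<Sum>j\<in>nbhd i. u i - u j))
      \<le> 25/6 * L + (real a + 11/3) * (u s)\<^sup>2 + (real a + 3) * (u (s + 1))\<^sup>2
        + (real b + 3) * (u (s + 3))\<^sup>2 + (real b + 11/3) * (u (s + 4))\<^sup>2 + 25/6 * R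
        + (real a + 3) * QA + (real b + 3) * QB"
  proof -
    \<comment> \<open>the cross terms of the path edge and of the completed square from the clique cancel\<close>
    have sq: "(x - y)\<^sup>2 + (x + y)\<^sup>2 = 2 * x\<^sup>2 + 2 * y\<^sup>2" for x y :: real
      by (simp add: power2_diff power2_sum)
    show ?thesis
      using H_form_eq[of u] path left right A B sq[of "u s" "u (s + 1)"] sq[of "u (s + 3)" "u (s + 4)"]
      unfolding distrib_left distrib_right by linarith
  qed
  also have "\<dots> \<le> (real a + real b + 8/3)
      * (L + (u s)\<^sup>2 + (u (s + 1))\<^sup>2 + (u (s + 3))\<^sup>2 + (u (s + 4))\<^sup>2 + R + QA + QB)"
  proof -
    have a: "1 \<le> real a" and b: "1 \<le> real b" using a_pos b_pos by simp_all
    show ?thesis unfolding distrib_left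
      by (intro add_mono; rule mult_right_mono;
          (use a b in linarith | simp add: L_def R_def QA_def QB_def sum_nonneg))
  qed
  finally show ?thesis unfolding vertices .
qed

lemma laplacian_form_le:
  assumes v: "v \<in> carrier_vec n" and v_t: "v $ (t - 1) = 0"
  shows "v \<bullet> (laplacian n (H_adj d t a b) *\<^sub>v v) \<le> (real a + real b + 8/3) * (v \<bullet> v)"
proof -
  have "v \<bullet> (laplacian n (H_adj d t a b) *\<^sub>v v) = (\<Sum>i<n. v $ i * (\<Sum>j\<in>nbhd i. v $ i - v $ j))"
    by (rule laplacian_form[OF H_adj_irrefl v])
  also have "\<dots> \<le> (real a + real b + 8/3) * (\<Sum>i<n. (v $ i)\<^sup>2)"
    by (rule H_form_le) (rule v_t)
  also have "(\<Sum>i<n. (v $ i)\<^sup>2) = v \<bullet> v"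
    using v by (simp add: scalar_prod_def lessThan_atLeast0 power2_eq_square)
  finally show ?thesis .
qed

end

theorem lemma4p1:
  fixes n d t a b :: nat
  assumes "3 \<le> t" "t + 2 \<le> d" "d + 3 \<le> n"
    and "0 < a" "0 < b" "a + b = n - d - 1"
  shows "mu (laplacian n (H_adj d t a b)) (n - d) < real (n - d + 2)"
proof -
  have n: "n = d + a + b + 1" using assms by simp
  interpret H_graph n d t a b
    by unfold_locales (use assms(1,2,4,5) n in auto)
  let ?L = "laplacian n (H_adj d t a b)"
  have form: "v \<bullet> (?L *\<^sub>v v) < (real a + real b + 3) * (v \<bullet> v)"
    if v: "v \<in> carrier_vec n" "v \<noteq> 0\<^sub>v n" "v $ (t - 1) = 0" for v
  proof -
    have "0 < v \<bullet> v" using v conjugate_square_greater_0_vec[OF v(1)] by simp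
    then have "(real a + real b + 8/3) * (v \<bullet> v) < (real a + real b + 3) * (v \<bullet> v)"
      by (intro mult_strict_right_mono) simp_all
    with laplacian_form_le[OF v(1,3)] show ?thesis by linarith
  qed
  have "mu ?L (n - d) < real a + real b + 3"
  proof (rule mu_less_if_form_less_on_hyperplane)
    show "?L \<in> carrier_mat n n" by (rule laplacian_carrier)
    show "transpose_mat ?L = ?L" by (rule laplacian_transpose) (rule H_adj_sym)
    show "t - 1 < n" "2 \<le> n - d" "n - d \<le> n" using n t_ge d_ge a_pos by auto
  qed (rule form)
  then show ?thesis using n by simp
qed

end
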